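(* In the lace-expansion setting described in the context, suppose $\sum_x|x|^M|\Pi(x)|<\infty$ for a positive integer $M$. Then for every $1\le m\le M$ and $j=1,\dots,d$ there is a constant $c$ (possibly depending on $m$) such that $$\Big|\frac{\partial^m}{\partial k_j^m}\hat G(k)\Big|\le\frac{c}{|k|^{2+m}}\qquad(k\in[-\pi,\pi]^d\setminus\{0\}).$$
   Context: Lace-expansion setting: $d\ge3$; $\Pi:\mathbb{Z}^d\to\mathbb{R}$ is $\mathbb{Z}^d$-symmetric (invariant under permutations and sign changes of coordinates) with $\sum_x|x|^2|\Pi(x)|<\infty$, and $\hat\Pi(k)=\sum_x\Pi(x)e^{-ik\cdot x}$. Let $\hat D(k)=\frac1d\sum_{j=1}^d\cos k_j$, and let $p>0$, $G_0>0$ be constants. $(\hat J,\hat g)$ is one of: (a) $\hat J=2dp\hat D+\hat\Pi$, $\hat g=1$; (b) $\hat J=2dp\hat D(1+\hat\Pi)$, $\hat g=1+\hat\Pi$; (c) $\hat J=2dp\hat D(G_0+\hat\Pi)$, $\hat g=G_0+\hat\Pi$. It is assumed that $\hat J(0)=1$ and that there is $c_1>0$ with $\hat J(0)-\hat J(k)\ge c_1|k|^2$ for all $k\in[-\pi,\pi]^d$. Set $\hat G(k)=\hat g(k)/(1-\hat J(k))$ and $G(x)=\int_{[-\pi,\pi]^d}\frac{d^dk}{(2\pi)^d}e^{ik\cdot x}\hat G(k)$. *)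

theory Defs
  imports "HOL-Analysis.Analysis"
begin

text \<open>Lattice points of Z^d are modelled as int^'d, momenta k as real^'d.\<close>

definition lat :: "int ^ 'd \<Rightarrow> real ^ 'd" where
  "lat x = (\<chi> i. real_of_int (x $ i))"

definition Zd_symmetric :: "(int ^ 'd \<Rightarrow> real) \<Rightarrow> bool" where
  "Zd_symmetric P \<longleftrightarrow>
     (\<forall>\<sigma> s x. \<sigma> permutes (UNIV :: 'd set) \<and> (\<forall>i. s i \<in> {-1, 1 :: int}) \<longrightarrow>
        P (\<chi> i. s i * x $ (\<sigma> i)) = P x)"

definition FT :: "(int ^ 'd \<Rightarrow> real) \<Rightarrow> real ^ 'd \<Rightarrow> complex" where
  "FT P k = (\<Sum>\<^sub>\<infinity> x. complex_of_real (P x) * exp (- \<i> * complex_of_real (k \<bullet> lat x)))"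

definition Dhat :: "real ^ 'd \<Rightarrow> real" where
  "Dhat k = (1 / real CARD('d)) * (\<Sum>j\<in>UNIV. cos (k $ j))"

datatype lace_case = CaseA | CaseB | CaseC

definition Jhat :: "lace_case \<Rightarrow> real \<Rightarrow> real \<Rightarrow> (int ^ 'd \<Rightarrow> real) \<Rightarrow> real ^ 'd \<Rightarrow> complex" where
  "Jhat c p G0 P k = (case c of
      CaseA \<Rightarrow> of_real (2 * real CARD('d) * p * Dhat k) + FT P k
    | CaseB \<Rightarrow> of_real (2 * real CARD('d) * p * Dhat k) * (1 + FT P k)
    | CaseC \<Rightarrow> of_real (2 * real CARD('d) * p * Dhat k) * (of_real G0 + FT P k))"

definition ghat :: "lace_case \<Rightarrow> real \<Rightarrow> (int ^ 'd \<Rightarrow> real) \<Rightarrow> real ^ 'd \<Rightarrow> complex" where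
  "ghat c G0 P k = (case c of
      CaseA \<Rightarrow> 1
    | CaseB \<Rightarrow> 1 + FT P k
    | CaseC \<Rightarrow> of_real G0 + FT P k)"

definition Ghat :: "lace_case \<Rightarrow> real \<Rightarrow> real \<Rightarrow> (int ^ 'd \<Rightarrow> real) \<Rightarrow> real ^ 'd \<Rightarrow> complex" where
  "Ghat c p G0 P k = ghat c G0 P k / (1 - Jhat c p G0 P k)"

fun nvderiv :: "nat \<Rightarrow> (real \<Rightarrow> complex) \<Rightarrow> real \<Rightarrow> complex" where
  "nvderiv 0 f = f"
| "nvderiv (Suc n) f = (\<lambda>t. vector_derivative (nvderiv n f) (at t))"

definition partial_dir :: "nat \<Rightarrow> 'd \<Rightarrow> (real ^ 'd \<Rightarrow> complex) \<Rightarrow> real ^ 'd \<Rightarrow> real \<Rightarrow> complex" where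
  "partial_dir m j F k = nvderiv m (\<lambda>t. F (k + t *\<^sub>R axis j 1))"

definition cube :: "(real ^ 'd) set" where
  "cube = {k. \<forall>i. \<bar>k $ i\<bar> \<le> pi}"

end

theory Submission
  imports Defs
begin

text \<open>
  Everything is restricted to the lines \<open>t \<mapsto> k + t e\<^sub>j\<close>. Call a family of functions
  \<open>F\<^sub>k\<close> a jet of order \<open>a\<close> if the \<open>i\<close>-th derivative of \<open>F\<^sub>k\<close> at \<open>0\<close> is
  \<open>O(|k|\<^sup>a\<^sup>-\<^sup>i)\<close> for all \<open>i\<close> up to a fixed number of derivatives. Jets are closed under sums and
  products (orders add), and if \<open>F\<^sub>k'\<close> is a jet of order \<open>a - 1\<close> and \<open>F\<^sub>k(0) = O(|k|\<^sup>a)\<close>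
  then \<open>F\<^sub>k\<close> is a jet of order \<open>a\<close>.

  The moment condition makes \<open>Jhat\<close> and \<open>ghat\<close> jets of order \<open>0\<close>, since the derivatives
  of a lattice Fourier transform are the Fourier transforms of the moments. By symmetry
  \<open>Jhat\<close> is even in \<open>k\<^sub>j\<close>, so \<open>\<partial>\<^sub>jJhat\<close> vanishes on \<open>k\<^sub>j = 0\<close>; as its derivative is
  bounded, \<open>\<partial>\<^sub>jJhat(k) = O(|k|)\<close> and \<open>\<partial>\<^sub>jJhat\<close> is a jet of order \<open>1\<close>. The infrared bound
  \<open>|1 - Jhat(k)| \<ge> c\<^sub>1|k|\<^sup>2\<close> and \<open>(1/(1 - J))' = J'/(1 - J)\<^sup>2\<close> then show by induction on the
  number of derivatives that \<open>1/(1 - Jhat)\<close>, and hence \<open>Ghat = ghat/(1 - Jhat)\<close>, is a jet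
  of order \<open>-2\<close>.
\<close>

section \<open>Iterated derivatives on the real line\<close>

lemma nvderiv_Suc_right: "nvderiv (Suc n) f = nvderiv n (\<lambda>t. vector_derivative f (at t))"
  by (induction n) auto

lemma nvderiv_cong_open:
  assumes "open S" "\<And>s. s \<in> S \<Longrightarrow> f s = g s" "t \<in> S"
  shows "nvderiv n f t = nvderiv n g t"
  using assms(3)
proof (induction n arbitrary: t)
  case 0
  then show ?case using assms(2) by simp
next
  case (Suc n)
  have "eventually (\<lambda>s. s \<in> UNIV \<longrightarrow> nvderiv n f s = nvderiv n g s) (nhds t)"
    using Suc assms(1) by (auto simp: eventually_nhds)
  then show ?case by (simp add: vector_derivative_cong_eq)
qed

definition differentiable_upto :: "nat \<Rightarrow> (real \<Rightarrow> complex) \<Rightarrow> real set \<Rightarrow> bool" where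
  "differentiable_upto n f S \<longleftrightarrow> (\<forall>i<n. \<forall>t\<in>S. nvderiv i f differentiable (at t))"

lemma differentiable_upto_subset:
  "differentiable_upto n f S \<Longrightarrow> T \<subseteq> S \<Longrightarrow> differentiable_upto n f T"
  unfolding differentiable_upto_def by blast

lemma differentiable_upto_le:
  "differentiable_upto n f S \<Longrightarrow> m \<le> n \<Longrightarrow> differentiable_upto m f S"
  unfolding differentiable_upto_def by auto

lemma has_vector_derivative_nvderiv:
  assumes "differentiable_upto n f S" "i < n" "t \<in> S"
  shows "(nvderiv i f has_vector_derivative nvderiv (Suc i) f t) (at t)"
  using assms unfolding differentiable_upto_def by (simp add: vector_derivative_works[symmetric])

lemma nvderiv_eq_derivative_chain:
  assumes S: "open S" and f: "\<And>t. t \<in> S \<Longrightarrow> fs 0 t = f t"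
    and fs: "\<And>i t. i < n \<Longrightarrow> t \<in> S \<Longrightarrow> (fs i has_vector_derivative fs (Suc i) t) (at t)"
    and "i \<le> n" "t \<in> S"
  shows "nvderiv i f t = fs i t"
  using assms(4,5)
proof (induction i arbitrary: t)
  case 0
  then show ?case using f by simp
next
  case (Suc i)
  have "eventually (\<lambda>s. s \<in> UNIV \<longrightarrow> nvderiv i f s = fs i s) (nhds t)"
    using Suc S by (auto simp: eventually_nhds)
  then have "nvderiv (Suc i) f t = vector_derivative (fs i) (at t)"
    by (simp add: vector_derivative_cong_eq)
  also have "\<dots> = fs (Suc i) t"
    using Suc by (intro vector_derivative_at fs) auto
  finally show ?case .
qed

lemma differentiable_upto_derivative_chain:
  assumes S: "open S" and f: "\<And>t. t \<in> S \<Longrightarrow> fs 0 t = f t"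
    and fs: "\<And>i t. i < n \<Longrightarrow> t \<in> S \<Longrightarrow> (fs i has_vector_derivative fs (Suc i) t) (at t)"
  shows "differentiable_upto n f S"
  unfolding differentiable_upto_def
proof (intro allI impI ballI)
  fix i t assume i: "i < n" and t: "t \<in> S"
  have "(nvderiv i f has_vector_derivative fs (Suc i) t) (at t)"
    using nvderiv_eq_derivative_chain[OF S f fs] i
    by (intro has_vector_derivative_transform_within_open[OF fs[OF i t] S t]) auto
  then show "nvderiv i f differentiable at t" by (rule differentiableI_vector)
qed

lemma nvderiv_Suc_eq_of_derivative:
  assumes S: "open S" and f: "\<And>t. t \<in> S \<Longrightarrow> (f has_vector_derivative f' t) (at t)" and "t \<in> S"
  shows "nvderiv (Suc i) f t = nvderiv i f' t"
proof -
  have "nvderiv (Suc i) f t = nvderiv i (\<lambda>t. vector_derivative f (at t)) t"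
    by (simp only: nvderiv_Suc_right)
  also have "\<dots> = nvderiv i f' t"
    by (rule nvderiv_cong_open[OF S _ \<open>t \<in> S\<close>]) (use f vector_derivative_at in auto)
  finally show ?thesis .
qed

lemma differentiable_upto_Suc_of_derivative:
  assumes S: "open S" and f: "\<And>t. t \<in> S \<Longrightarrow> (f has_vector_derivative f' t) (at t)"
    and f': "differentiable_upto n f' S"
  shows "differentiable_upto (Suc n) f S"
  unfolding differentiable_upto_def
proof (intro allI impI ballI)
  fix i t assume i: "i < Suc n" and t: "t \<in> S"
  show "nvderiv i f differentiable at t"
  proof (cases i)
    case 0
    then show ?thesis using f[OF t] by (auto intro: differentiableI_vector)
  next
    case (Suc i')
    have "(nvderiv i' f' has_vector_derivative nvderiv (Suc i') f' t) (at t)"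
      using has_vector_derivative_nvderiv[OF f'] Suc i t by simp
    then have "(nvderiv i f has_vector_derivative nvderiv (Suc i') f' t) (at t)"
      by (rule has_vector_derivative_transform_within_open[OF _ S t])
        (use nvderiv_Suc_eq_of_derivative[OF S f] Suc in auto)
    then show ?thesis by (rule differentiableI_vector)
  qed
qed

lemma
  assumes S: "open S" and f: "differentiable_upto n f S" and g: "differentiable_upto n g S"
  shows nvderiv_add: "\<And>i t. i \<le> n \<Longrightarrow> t \<in> S \<Longrightarrow>
      nvderiv i (\<lambda>t. f t + g t) t = nvderiv i f t + nvderiv i g t"
    and differentiable_upto_add: "differentiable_upto n (\<lambda>t. f t + g t) S"
proof -
  let ?fs = "\<lambda>i t. nvderiv i f t + nvderiv i g t"
  have fs: "(?fs i has_vector_derivative ?fs (Suc i) t) (at t)" if "i < n" "t \<in> S" for i t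
    using has_vector_derivative_nvderiv[OF f that] has_vector_derivative_nvderiv[OF g that]
    by (rule has_vector_derivative_add)
  show "nvderiv i (\<lambda>t. f t + g t) t = ?fs i t" if "i \<le> n" "t \<in> S" for i t
    using nvderiv_eq_derivative_chain[where f="\<lambda>t. f t + g t" and fs="?fs", OF S _ fs] that by simp
  show "differentiable_upto n (\<lambda>t. f t + g t) S"
    using differentiable_upto_derivative_chain[where f="\<lambda>t. f t + g t" and fs="?fs", OF S _ fs] by simp
qed

lemma has_vector_derivative_shift_arg:
  assumes "(g has_vector_derivative D) (at (t + s))"
  shows "((\<lambda>t. g (t + s)) has_vector_derivative D) (at t)"
proof -
  have "((\<lambda>t. t + s) has_vector_derivative 1) (at t)"
    by (auto intro!: derivative_eq_intros)
  from vector_diff_chain_at[OF this] assms show ?thesis by (simp add: o_def)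
qed

lemma vector_derivative_shift_arg:
  "vector_derivative (\<lambda>t. g (t + s)) (at t) = vector_derivative g (at (t + s))"
proof -
  have "((\<lambda>t. g (t + s)) has_vector_derivative D) (at t) \<longleftrightarrow> (g has_vector_derivative D) (at (t + s))"
    for D
    using has_vector_derivative_shift_arg[of g D t s]
      has_vector_derivative_shift_arg[of "\<lambda>t. g (t + s)" D "t + s" "- s"]
    by auto
  then show ?thesis unfolding vector_derivative_def by simp
qed

lemma nvderiv_shift_arg: "nvderiv n (\<lambda>t. f (t + s)) = (\<lambda>t. nvderiv n f (t + s))"
  by (induction n) (simp_all add: vector_derivative_shift_arg)

lemma vector_derivative_even_at_0:
  fixes f :: "real \<Rightarrow> 'a::real_normed_vector"
  assumes even: "\<And>t. f (- t) = f t" and "f differentiable (at 0)"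
  shows "vector_derivative f (at 0) = 0"
proof -
  define D where "D = vector_derivative f (at 0)"
  have D: "(f has_vector_derivative D) (at 0)"
    using assms(2) by (simp add: D_def vector_derivative_works)
  have "((f \<circ> uminus) has_vector_derivative (-1::real) *\<^sub>R D) (at 0)"
    using D by (intro vector_diff_chain_at) (auto intro!: derivative_eq_intros)
  moreover have "f \<circ> uminus = f" using even by (auto simp: o_def)
  ultimately have "(f has_vector_derivative - D) (at 0)" by simp
  with D have "D = - D" by (rule vector_derivative_unique_at)
  then have "2 *\<^sub>R D = 0" by (metis add.right_inverse scaleR_2)
  then show ?thesis by (simp add: D_def)
qed

lemma norm_diff_le_by_vector_derivative:
  fixes f f' :: "real \<Rightarrow> 'a::real_normed_vector"
  assumes "\<And>x. (f has_vector_derivative f' x) (at x)" and "\<And>x. norm (f' x) \<le> B"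
  shows "norm (f a - f b) \<le> B * \<bar>a - b\<bar>"
proof -
  have "onorm (\<lambda>h. h *\<^sub>R f' x) \<le> B" for x
    using assms(2)[of x] by (simp add: onorm_scaleR_left[OF bounded_linear_ident] onorm_id)
  then show ?thesis
    using differentiable_bound[of UNIV f "\<lambda>x h. h *\<^sub>R f' x" B a b] assms(1)
    by (simp add: has_vector_derivative_def)
qed

section \<open>Jets with weighted bounds\<close>

locale weighted_family =
  fixes K :: "'k set" and W :: "'k \<Rightarrow> real" and S :: "'k \<Rightarrow> real set"
  assumes weight_pos: "k \<in> K \<Longrightarrow> 0 < W k"
    and open_domain: "k \<in> K \<Longrightarrow> open (S k)" and zero_in_domain: "k \<in> K \<Longrightarrow> 0 \<in> S k"
begin

definition jet_bounded :: "nat \<Rightarrow> real \<Rightarrow> ('k \<Rightarrow> real \<Rightarrow> complex) \<Rightarrow> bool" where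
  "jet_bounded n a F \<longleftrightarrow> (\<exists>C. \<forall>k\<in>K. differentiable_upto n (F k) (S k) \<and>
      (\<forall>i\<le>n. norm (nvderiv i (F k) 0) \<le> C * W k powr (a - real i)))"

lemma jet_boundedI:
  assumes "\<And>k. k \<in> K \<Longrightarrow> differentiable_upto n (F k) (S k)"
    and "\<And>k i. k \<in> K \<Longrightarrow> i \<le> n \<Longrightarrow> norm (nvderiv i (F k) 0) \<le> C * W k powr (a - real i)"
  shows "jet_bounded n a F"
  unfolding jet_bounded_def using assms by blast

lemma jet_boundedE:
  assumes "jet_bounded n a F"
  obtains C where "C \<ge> 0" "\<And>k. k \<in> K \<Longrightarrow> differentiable_upto n (F k) (S k)"
    "\<And>k i. k \<in> K \<Longrightarrow> i \<le> n \<Longrightarrow> norm (nvderiv i (F k) 0) \<le> C * W k powr (a - real i)"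
proof -
  obtain C where C: "\<forall>k\<in>K. differentiable_upto n (F k) (S k) \<and>
      (\<forall>i\<le>n. norm (nvderiv i (F k) 0) \<le> C * W k powr (a - real i))"
    using assms unfolding jet_bounded_def by blast
  show ?thesis
  proof (rule that[of "max C 0"])
    fix k i assume "k \<in> K" "i \<le> n"
    then have "norm (nvderiv i (F k) 0) \<le> C * W k powr (a - real i)" using C by blast
    also have "\<dots> \<le> max C 0 * W k powr (a - real i)" by (intro mult_right_mono) auto
    finally show "norm (nvderiv i (F k) 0) \<le> max C 0 * W k powr (a - real i)" .
  qed (use C in auto)
qed

lemma jet_bounded_le:
  assumes "jet_bounded n a F" "m \<le> n"
  shows "jet_bounded m a F"
  using assms unfolding jet_bounded_def by (meson le_trans differentiable_upto_le)

lemma jet_bounded_derivative_chain: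
  assumes "\<And>k t. k \<in> K \<Longrightarrow> t \<in> S k \<Longrightarrow> fs k 0 t = F k t"
    and "\<And>k i t. k \<in> K \<Longrightarrow> i < n \<Longrightarrow> t \<in> S k \<Longrightarrow>
      (fs k i has_vector_derivative fs k (Suc i) t) (at t)"
    and "\<And>k i. k \<in> K \<Longrightarrow> i \<le> n \<Longrightarrow> norm (fs k i 0) \<le> C * W k powr (a - real i)"
  shows "jet_bounded n a F"
proof (rule jet_boundedI)
  fix k assume k: "k \<in> K"
  show "differentiable_upto n (F k) (S k)"
    using differentiable_upto_derivative_chain[OF open_domain[OF k]] assms(1,2) k by blast
  fix i assume "i \<le> n"
  then show "norm (nvderiv i (F k) 0) \<le> C * W k powr (a - real i)"
    using nvderiv_eq_derivative_chain[OF open_domain[OF k], of "fs k" "F k" n i 0]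
      assms k zero_in_domain[OF k] by simp
qed

lemma jet_bounded_const: "jet_bounded n 0 (\<lambda>k t. c)"
  by (rule jet_bounded_derivative_chain[where fs="\<lambda>k i t. if i = 0 then c else 0" and C="norm c"])
    (auto dest: weight_pos)

lemma jet_bounded_add:
  assumes "jet_bounded n a F" "jet_bounded n a G"
  shows "jet_bounded n a (\<lambda>k t. F k t + G k t)"
proof -
  obtain C1 where C1: "\<And>k. k \<in> K \<Longrightarrow> differentiable_upto n (F k) (S k)"
    "\<And>k i. k \<in> K \<Longrightarrow> i \<le> n \<Longrightarrow> norm (nvderiv i (F k) 0) \<le> C1 * W k powr (a - real i)"
    using assms(1) by (rule jet_boundedE) blast
  obtain C2 where C2: "\<And>k. k \<in> K \<Longrightarrow> differentiable_upto n (G k) (S k)"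
    "\<And>k i. k \<in> K \<Longrightarrow> i \<le> n \<Longrightarrow> norm (nvderiv i (G k) 0) \<le> C2 * W k powr (a - real i)"
    using assms(2) by (rule jet_boundedE) blast
  show ?thesis
  proof (rule jet_boundedI[where C="C1 + C2"])
    fix k assume k: "k \<in> K"
    note sum = nvderiv_add[OF open_domain[OF k] C1(1)[OF k] C2(1)[OF k]]
    show "differentiable_upto n (\<lambda>t. F k t + G k t) (S k)"
      using differentiable_upto_add[OF open_domain[OF k] C1(1)[OF k] C2(1)[OF k]] .
    fix i assume i: "i \<le> n"
    have "norm (nvderiv i (\<lambda>t. F k t + G k t) 0)
        \<le> norm (nvderiv i (F k) 0) + norm (nvderiv i (G k) 0)"
      using sum[OF i zero_in_domain[OF k]] by (simp add: norm_triangle_ineq)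
    also have "\<dots> \<le> (C1 + C2) * W k powr (a - real i)"
      using C1(2)[OF k i] C2(2)[OF k i] by (simp add: distrib_right)
    finally show "norm (nvderiv i (\<lambda>t. F k t + G k t) 0) \<le> (C1 + C2) * W k powr (a - real i)" .
  qed
qed

lemma jet_bounded_deriv:
  assumes "jet_bounded (Suc n) a F"
  shows "jet_bounded n (a - 1) (\<lambda>k t. vector_derivative (F k) (at t))"
proof -
  obtain C where C: "\<And>k. k \<in> K \<Longrightarrow> differentiable_upto (Suc n) (F k) (S k)"
    "\<And>k i. k \<in> K \<Longrightarrow> i \<le> Suc n \<Longrightarrow> norm (nvderiv i (F k) 0) \<le> C * W k powr (a - real i)"
    using assms by (rule jet_boundedE) blast
  show ?thesis
  proof (rule jet_boundedI[where C=C])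
    fix k assume k: "k \<in> K"
    show "differentiable_upto n (\<lambda>t. vector_derivative (F k) (at t)) (S k)"
      using C(1)[OF k] unfolding differentiable_upto_def nvderiv_Suc_right[symmetric] by auto
    fix i assume "i \<le> n"
    then show "norm (nvderiv i (\<lambda>t. vector_derivative (F k) (at t)) 0) \<le> C * W k powr (a - 1 - real i)"
      using C(2)[OF k, of "Suc i"] unfolding nvderiv_Suc_right[symmetric] by (simp add: algebra_simps)
  qed
qed

lemma jet_bounded_primitive:
  assumes D: "jet_bounded n (a - 1) D"
    and F: "\<And>k t. k \<in> K \<Longrightarrow> t \<in> S k \<Longrightarrow> (F k has_vector_derivative D k t) (at t)"
    and F0: "\<And>k. k \<in> K \<Longrightarrow> norm (F k 0) \<le> B * W k powr a"
  shows "jet_bounded (Suc n) a F"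
proof -
  obtain C where C: "C \<ge> 0" "\<And>k. k \<in> K \<Longrightarrow> differentiable_upto n (D k) (S k)"
    "\<And>k i. k \<in> K \<Longrightarrow> i \<le> n \<Longrightarrow> norm (nvderiv i (D k) 0) \<le> C * W k powr (a - 1 - real i)"
    using D by (rule jet_boundedE) blast
  show ?thesis
  proof (rule jet_boundedI[where C="max B C"])
    fix k assume k: "k \<in> K"
    show "differentiable_upto (Suc n) (F k) (S k)"
      by (rule differentiable_upto_Suc_of_derivative[OF open_domain[OF k] F[OF k] C(2)[OF k]])
    fix i assume i: "i \<le> Suc n"
    show "norm (nvderiv i (F k) 0) \<le> max B C * W k powr (a - real i)"
    proof (cases i)
      case 0
      then show ?thesis
        using F0[OF k] mult_right_mono[OF max.cobounded1[of B C], of "W k powr a"] by simp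
    next
      case (Suc i')
      then have "norm (nvderiv i (F k) 0) = norm (nvderiv i' (D k) 0)"
        using nvderiv_Suc_eq_of_derivative[OF open_domain[OF k] F[OF k] zero_in_domain[OF k]] by simp
      also have "\<dots> \<le> C * W k powr (a - real i)"
        using C(3)[OF k, of i'] Suc i by (simp add: algebra_simps)
      also have "\<dots> \<le> max B C * W k powr (a - real i)"
        by (intro mult_right_mono) auto
      finally show ?thesis .
    qed
  qed
qed

lemma jet_bounded_has_vector_derivative:
  assumes "jet_bounded (Suc n) a F" "k \<in> K" "t \<in> S k"
  shows "(F k has_vector_derivative vector_derivative (F k) (at t)) (at t)"
  using assms has_vector_derivative_nvderiv[of "Suc n" "F k" "S k" 0 t]
  unfolding jet_bounded_def by auto

lemma jet_bounded_mult_at_0: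
  assumes "jet_bounded n a F" "jet_bounded n b G"
  obtains C where "\<And>k. k \<in> K \<Longrightarrow> norm (F k 0 * G k 0) \<le> C * W k powr (a + b)"
proof -
  obtain C1 where C1: "C1 \<ge> 0"
    "\<And>k i. k \<in> K \<Longrightarrow> i \<le> n \<Longrightarrow> norm (nvderiv i (F k) 0) \<le> C1 * W k powr (a - real i)"
    using assms(1) by (rule jet_boundedE) blast+
  obtain C2 where C2:
    "\<And>k i. k \<in> K \<Longrightarrow> i \<le> n \<Longrightarrow> norm (nvderiv i (G k) 0) \<le> C2 * W k powr (b - real i)"
    using assms(2) by (rule jet_boundedE) blast+
  have "norm (F k 0 * G k 0) \<le> C1 * C2 * W k powr (a + b)" if k: "k \<in> K" for k
  proof -
    have "norm (F k 0 * G k 0) \<le> (C1 * W k powr a) * (C2 * W k powr b)"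
      unfolding norm_mult using C1(1) C1(2)[OF k, of 0] C2[OF k, of 0] by (intro mult_mono) auto
    also have "\<dots> = C1 * C2 * W k powr (a + b)"
      by (simp add: powr_add mult_ac)
    finally show ?thesis .
  qed
  then show ?thesis by (rule that)
qed

lemma jet_bounded_mult:
  assumes "jet_bounded n a F" "jet_bounded n b G"
  shows "jet_bounded n (a + b) (\<lambda>k t. F k t * G k t)"
  using assms
proof (induction n arbitrary: a b F G)
  case 0
  then obtain C where "\<And>k. k \<in> K \<Longrightarrow> norm (F k 0 * G k 0) \<le> C * W k powr (a + b)"
    by (rule jet_bounded_mult_at_0) blast
  then show ?case
    by (intro jet_boundedI[where C=C]) (auto simp: differentiable_upto_def)
next
  case (Suc n)
  define F' where "F' = (\<lambda>k t. vector_derivative (F k) (at t))"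
  define G' where "G' = (\<lambda>k t. vector_derivative (G k) (at t))"
  have F: "jet_bounded n a F" "jet_bounded n (a - 1) F'"
    using jet_bounded_le[OF Suc.prems(1)] jet_bounded_deriv[OF Suc.prems(1)] by (simp_all add: F'_def)
  have G: "jet_bounded n b G" "jet_bounded n (b - 1) G'"
    using jet_bounded_le[OF Suc.prems(2)] jet_bounded_deriv[OF Suc.prems(2)] by (simp_all add: G'_def)
  have "jet_bounded n (a + b - 1) (\<lambda>k t. F k t * G' k t)"
    using Suc.IH[OF F(1) G(2)] by (simp add: add_diff_eq)
  moreover have "jet_bounded n (a + b - 1) (\<lambda>k t. F' k t * G k t)"
    using Suc.IH[OF F(2) G(1)] by (simp add: diff_add_eq)
  ultimately have "jet_bounded n (a + b - 1) (\<lambda>k t. F k t * G' k t + F' k t * G k t)"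
    by (rule jet_bounded_add)
  moreover have "((\<lambda>t. F k t * G k t) has_vector_derivative F k t * G' k t + F' k t * G k t) (at t)"
    if "k \<in> K" "t \<in> S k" for k t
    using jet_bounded_has_vector_derivative[OF Suc.prems(1) that]
      jet_bounded_has_vector_derivative[OF Suc.prems(2) that]
    unfolding F'_def G'_def by (rule has_vector_derivative_mult)
  moreover obtain C where "\<And>k. k \<in> K \<Longrightarrow> norm (F k 0 * G k 0) \<le> C * W k powr (a + b)"
    using Suc.prems by (rule jet_bounded_mult_at_0) blast
  ultimately show ?case by (rule jet_bounded_primitive)
qed

lemma jet_bounded_uminus: "jet_bounded n a F \<Longrightarrow> jet_bounded n a (\<lambda>k t. - F k t)"
  using jet_bounded_mult[OF jet_bounded_const[of n "- 1"]] by simp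

lemma jet_bounded_inverse:
  assumes D: "jet_bounded n (b - 1) D"
    and F: "\<And>k t. k \<in> K \<Longrightarrow> t \<in> S k \<Longrightarrow> (F k has_vector_derivative D k t) (at t)"
    and nonzero: "\<And>k t. k \<in> K \<Longrightarrow> t \<in> S k \<Longrightarrow> F k t \<noteq> 0"
    and F0: "\<And>k. k \<in> K \<Longrightarrow> c * W k powr b \<le> norm (F k 0)" and c: "c > 0"
  shows "jet_bounded (Suc n) (- b) (\<lambda>k t. inverse (F k t))"
proof -
  let ?H = "\<lambda>k t. inverse (F k t)"
  have H0: "norm (?H k 0) \<le> inverse c * W k powr (- b)" if k: "k \<in> K" for k
  proof -
    have "0 < c * W k powr b" using c weight_pos[OF k] by simp
    from le_imp_inverse_le[OF F0[OF k] this]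
    have "norm (?H k 0) \<le> inverse (c * W k powr b)"
      by (simp only: norm_inverse)
    also have "\<dots> = inverse c * W k powr (- b)"
      by (simp add: powr_minus)
    finally show ?thesis .
  qed
  have H: "((?H k) has_vector_derivative - D k t * ?H k t * ?H k t) (at t)"
    if "k \<in> K" "t \<in> S k" for k t
    using field_vector_diff_chain_at[OF F[OF that] DERIV_inverse[OF nonzero[OF that]]]
    by (simp add: o_def power2_eq_square mult.assoc)
  have "m \<le> Suc n \<Longrightarrow> jet_bounded m (- b) ?H" for m
  proof (induction m)
    case 0
    show ?case by (rule jet_boundedI[where C="inverse c"]) (use H0 in \<open>auto simp: differentiable_upto_def\<close>)
  next
    case (Suc m)
    then have "jet_bounded m (b - 1) (\<lambda>k t. - D k t)" "jet_bounded m (- b) ?H"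
      using jet_bounded_uminus[OF jet_bounded_le[OF D]] by auto
    then have "jet_bounded m (b - 1 + - b + - b) (\<lambda>k t. - D k t * ?H k t * ?H k t)"
      by (intro jet_bounded_mult)
    moreover have "b - 1 + - b + - b = - b - 1" by simp
    ultimately have "jet_bounded m (- b - 1) (\<lambda>k t. - D k t * ?H k t * ?H k t)"
      by (simp only:)
    then show ?case
      by (rule jet_bounded_primitive[OF _ H H0])
  qed
  then show ?thesis by simp
qed

lemma jet_bounded_nvderiv_le:
  assumes "jet_bounded n (- real l) F"
  shows "\<exists>C. \<forall>k\<in>K. (\<forall>i<n. \<forall>\<^sub>F t in nhds 0. nvderiv i (F k) differentiable at t) \<and>
    norm (nvderiv n (F k) 0) \<le> C / W k ^ (l + n)"
proof -
  obtain C where C: "\<And>k. k \<in> K \<Longrightarrow> differentiable_upto n (F k) (S k)"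
    "\<And>k i. k \<in> K \<Longrightarrow> i \<le> n \<Longrightarrow> norm (nvderiv i (F k) 0) \<le> C * W k powr (- real l - real i)"
    using assms by (rule jet_boundedE) blast
  have "(\<forall>i<n. \<forall>\<^sub>F t in nhds 0. nvderiv i (F k) differentiable at t) \<and>
    norm (nvderiv n (F k) 0) \<le> C / W k ^ (l + n)" if k: "k \<in> K" for k
  proof (intro conjI allI impI)
    fix i assume "i < n"
    then have "\<forall>t\<in>S k. nvderiv i (F k) differentiable at t"
      using C(1)[OF k] unfolding differentiable_upto_def by blast
    then show "\<forall>\<^sub>F t in nhds 0. nvderiv i (F k) differentiable at t"
      using open_domain[OF k] zero_in_domain[OF k] unfolding eventually_nhds by blast
  next
    have "W k powr (- real l - real n) = W k powr (- real (l + n))" by simp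
    also have "\<dots> = inverse (W k ^ (l + n))"
      by (simp only: powr_minus powr_realpow[OF weight_pos[OF k]])
    finally show "norm (nvderiv n (F k) 0) \<le> C / W k ^ (l + n)"
      using C(2)[OF k, of n] by (simp add: divide_inverse)
  qed
  then show ?thesis by blast
qed

end

text \<open>With unit weight and the whole line as domain, jet bounds are plain uniform bounds on the
  derivatives at \<open>0\<close>, whatever the order \<open>a\<close>.\<close>

interpretation uniform: weighted_family "UNIV :: 'k set" "\<lambda>_. 1" "\<lambda>_. UNIV"
  by unfold_locales auto

lemma uniform_jet_bounded_iff:
  "uniform.jet_bounded n a F \<longleftrightarrow>
     (\<exists>C. \<forall>k. differentiable_upto n (F k) UNIV \<and> (\<forall>i\<le>n. norm (nvderiv i (F k) 0) \<le> C))"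
  unfolding uniform.jet_bounded_def by simp

context weighted_family
begin

lemma jet_bounded_of_uniform:
  assumes "uniform.jet_bounded n a F" and W_le: "\<And>k. k \<in> K \<Longrightarrow> W k \<le> R"
  shows "jet_bounded n 0 F"
proof -
  obtain C where C: "\<And>k. differentiable_upto n (F k) UNIV"
    "\<And>k i. i \<le> n \<Longrightarrow> norm (nvderiv i (F k) 0) \<le> C"
    using assms(1) unfolding uniform_jet_bounded_iff by blast
  show ?thesis
  proof (rule jet_boundedI[where C="C * max 1 R ^ n"])
    fix k assume k: "k \<in> K"
    show "differentiable_upto n (F k) (S k)"
      using C(1) by (rule differentiable_upto_subset) simp
    fix i assume i: "i \<le> n"
    have "W k ^ i \<le> max 1 R ^ i"
      using weight_pos[OF k] W_le[OF k] by (intro power_mono) auto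
    also have "\<dots> \<le> max 1 R ^ n"
      using i by (intro power_increasing) auto
    finally have "1 \<le> max 1 R ^ n * W k powr (0 - real i)"
      using weight_pos[OF k] by (simp add: powr_minus powr_realpow field_simps)
    moreover have "0 \<le> C" using C(2)[of 0] norm_ge_zero order_trans by blast
    ultimately have "C \<le> C * (max 1 R ^ n * W k powr (0 - real i))"
      using mult_left_mono by fastforce
    then show "norm (nvderiv i (F k) 0) \<le> C * max 1 R ^ n * W k powr (0 - real i)"
      using C(2)[OF i, of k] by (simp add: mult.assoc)
  qed
qed

end

section \<open>Term-wise differentiation of Fourier sums\<close>

definition fourier_term :: "('a \<Rightarrow> complex) \<Rightarrow> ('a \<Rightarrow> real) \<Rightarrow> nat \<Rightarrow> 'a \<Rightarrow> real \<Rightarrow> complex" where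
  "fourier_term b y n x t = b x * (- \<i> * of_real (y x)) ^ n * exp (- \<i> * (of_real t * of_real (y x)))"

definition fourier_sum :: "('a \<Rightarrow> complex) \<Rightarrow> ('a \<Rightarrow> real) \<Rightarrow> nat \<Rightarrow> real \<Rightarrow> complex" where
  "fourier_sum b y n t = (\<Sum>\<^sub>\<infinity>x. fourier_term b y n x t)"

lemma norm_exp_minus_i_times: "norm (exp (- \<i> * complex_of_real r)) = 1"
  using norm_exp_i_times[of "- r"] by simp

lemma norm_fourier_term: "norm (fourier_term b y n x t) = norm (b x) * \<bar>y x\<bar> ^ n"
  using norm_exp_minus_i_times[of "t * y x"]
  by (simp add: fourier_term_def norm_mult norm_power)

lemma has_vector_derivative_fourier_term:
  "(fourier_term b y n x has_vector_derivative fourier_term b y (Suc n) x t) (at t)"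
proof -
  have "((\<lambda>z. exp (- \<i> * (z * of_real (y x)))) has_field_derivative
      exp (- \<i> * (of_real t * of_real (y x))) * (- \<i> * of_real (y x))) (at (of_real t))"
    by (auto intro!: derivative_eq_intros)
  from has_vector_derivative_mult_right[OF has_vector_derivative_real_field[OF this],
      of "b x * (- \<i> * of_real (y x)) ^ n"]
  show ?thesis unfolding fourier_term_def by (simp add: algebra_simps)
qed

lemma has_vector_derivative_fourier_series:
  fixes b :: "nat \<Rightarrow> complex"
  assumes "summable (\<lambda>m. norm (b m) * \<bar>y m\<bar> ^ Suc n)"
    and "summable (\<lambda>m. norm (b m) * \<bar>y m\<bar> ^ n)"
  shows "((\<lambda>t. \<Sum>m. fourier_term b y n m t) has_vector_derivative
    (\<Sum>m. fourier_term b y (Suc n) m t)) (at t)"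
proof -
  define A where "A x = (\<Sum>m. fourier_term b y (Suc n) m x)" for x
  have A: "uniform_limit UNIV (\<lambda>N x. \<Sum>m<N. fourier_term b y (Suc n) m x) A sequentially"
    unfolding A_def by (rule Weierstrass_m_test[OF _ assms(1)]) (simp add: norm_fourier_term)
  have "\<exists>g. \<forall>x\<in>UNIV. (\<lambda>m. fourier_term b y n m x) sums g x \<and>
      (g has_derivative (\<lambda>h. h *\<^sub>R A x)) (at x within UNIV)"
  proof (rule has_derivative_series[where f'="\<lambda>m x h. h *\<^sub>R fourier_term b y (Suc n) m x"])
    show "(fourier_term b y n m has_derivative (\<lambda>h. h *\<^sub>R fourier_term b y (Suc n) m x))
        (at x within UNIV)" for m x
      using has_vector_derivative_fourier_term by (simp add: has_vector_derivative_def)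
    show "\<forall>\<^sub>F N in sequentially. \<forall>x\<in>UNIV. \<forall>h.
        norm ((\<Sum>m<N. h *\<^sub>R fourier_term b y (Suc n) m x) - h *\<^sub>R A x) \<le> e * norm h"
      if "e > 0" for e
      using uniform_limitD[OF A that]
    proof (rule eventually_mono)
      fix N assume N: "\<forall>x\<in>UNIV. dist (\<Sum>m<N. fourier_term b y (Suc n) m x) (A x) < e"
      show "\<forall>x\<in>UNIV. \<forall>h. norm ((\<Sum>m<N. h *\<^sub>R fourier_term b y (Suc n) m x) - h *\<^sub>R A x) \<le> e * norm h"
      proof (intro ballI allI)
        fix x h :: real
        have "norm ((\<Sum>m<N. h *\<^sub>R fourier_term b y (Suc n) m x) - h *\<^sub>R A x)
            = \<bar>h\<bar> * dist (\<Sum>m<N. fourier_term b y (Suc n) m x) (A x)"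
          by (simp add: scaleR_sum_right[symmetric] scaleR_diff_right[symmetric] dist_norm)
        also have "\<dots> \<le> \<bar>h\<bar> * e"
          using N by (intro mult_left_mono) (auto intro: less_imp_le)
        finally show "norm ((\<Sum>m<N. h *\<^sub>R fourier_term b y (Suc n) m x) - h *\<^sub>R A x) \<le> e * norm h"
          by (simp add: mult.commute)
      qed
    qed
    show "(\<lambda>m. fourier_term b y n m 0) sums (\<Sum>m. fourier_term b y n m 0)"
      by (rule summable_sums, rule summable_norm_cancel) (use assms(2) in \<open>simp add: norm_fourier_term\<close>)
  qed auto
  then obtain g where g: "\<And>x. (\<lambda>m. fourier_term b y n m x) sums g x"
    "\<And>x. (g has_derivative (\<lambda>h. h *\<^sub>R A x)) (at x)" by auto
  have "g = (\<lambda>t. \<Sum>m. fourier_term b y n m t)" using g(1) by (auto simp: sums_iff)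
  with g(2)[of t] show ?thesis by (simp add: has_vector_derivative_def A_def)
qed

lemma infsum_eq_suminf_from_nat_into:
  fixes f :: "'a \<Rightarrow> 'b::banach"
  assumes "countable (UNIV :: 'a set)" "infinite (UNIV :: 'a set)"
    and "(\<lambda>x. norm (f x)) summable_on UNIV"
  shows "infsum f UNIV = (\<Sum>m. f (from_nat_into UNIV m))"
    and "summable (\<lambda>m. norm (f (from_nat_into UNIV m)))"
proof -
  let ?e = "from_nat_into (UNIV :: 'a set)"
  have bij: "bij_betw ?e UNIV UNIV" by (rule bij_betw_from_nat_into[OF assms(1,2)])
  have norm_summable: "(\<lambda>m. norm (f (?e m))) summable_on UNIV"
    using summable_on_reindex_bij_betw[OF bij, of "\<lambda>x. norm (f x)"] assms(3) by simp
  then show "summable (\<lambda>m. norm (f (?e m)))" by (rule summable_on_imp_summable)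
  from norm_summable have "(\<lambda>m. f (?e m)) summable_on UNIV"
    by (rule abs_summable_summable)
  then have "(\<lambda>m. f (?e m)) sums infsum (\<lambda>m. f (?e m)) UNIV"
    by (intro has_sum_imp_sums has_sum_infsum)
  moreover have "infsum (\<lambda>m. f (?e m)) UNIV = infsum f UNIV"
    by (rule infsum_reindex_bij_betw[OF bij])
  ultimately show "infsum f UNIV = (\<Sum>m. f (?e m))" by (simp add: sums_iff)
qed

lemma has_vector_derivative_fourier_sum:
  fixes b :: "'a \<Rightarrow> complex"
  assumes "countable (UNIV :: 'a set)" "infinite (UNIV :: 'a set)"
    and "(\<lambda>x. norm (b x) * \<bar>y x\<bar> ^ Suc n) summable_on UNIV"
    and "(\<lambda>x. norm (b x) * \<bar>y x\<bar> ^ n) summable_on UNIV"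
  shows "(fourier_sum b y n has_vector_derivative fourier_sum b y (Suc n) t) (at t)"
proof -
  let ?e = "from_nat_into (UNIV :: 'a set)"
  have comp: "fourier_term (b \<circ> ?e) (y \<circ> ?e) k m t = fourier_term b y k (?e m) t" for k m t
    by (simp add: fourier_term_def)
  have reindex: "fourier_sum b y k t = (\<Sum>m. fourier_term (b \<circ> ?e) (y \<circ> ?e) k m t)"
    and summable: "summable (\<lambda>m. norm ((b \<circ> ?e) m) * \<bar>(y \<circ> ?e) m\<bar> ^ k)"
    if "(\<lambda>x. norm (b x) * \<bar>y x\<bar> ^ k) summable_on UNIV" for k t
  proof -
    have "(\<lambda>x. norm (fourier_term b y k x t)) summable_on UNIV"
      using that by (simp add: norm_fourier_term)
    from infsum_eq_suminf_from_nat_into[OF assms(1,2) this]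
    show "fourier_sum b y k t = (\<Sum>m. fourier_term (b \<circ> ?e) (y \<circ> ?e) k m t)"
      and "summable (\<lambda>m. norm ((b \<circ> ?e) m) * \<bar>(y \<circ> ?e) m\<bar> ^ k)"
      by (simp_all add: fourier_sum_def comp norm_fourier_term)
  qed
  have "fourier_sum b y n = (\<lambda>t. \<Sum>m. fourier_term (b \<circ> ?e) (y \<circ> ?e) n m t)"
    using reindex[OF assms(4)] by (intro ext)
  then show ?thesis
    unfolding reindex[OF assms(3)]
    by (simp only: has_vector_derivative_fourier_series[OF summable[OF assms(3)] summable[OF assms(4)]])
qed

lemma norm_fourier_sum_le:
  assumes "(\<lambda>x. norm (b x) * \<bar>y x\<bar> ^ n) summable_on UNIV"
  shows "norm (fourier_sum b y n t) \<le> (\<Sum>\<^sub>\<infinity>x. norm (b x) * \<bar>y x\<bar> ^ n)"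
  using norm_infsum_bound[of "\<lambda>x. fourier_term b y n x t" UNIV] assms
  by (simp add: fourier_sum_def norm_fourier_term)

section \<open>Lattice Fourier transforms along coordinate axes\<close>

definition axial :: "(real ^ 'd \<Rightarrow> 'a) \<Rightarrow> 'd \<Rightarrow> real ^ 'd \<Rightarrow> real \<Rightarrow> 'a" where
  "axial F j k t = F (k + t *\<^sub>R axis j 1)"

lemma partial_dir_eq_nvderiv_axial: "partial_dir m j F k = nvderiv m (axial F j k)"
  by (simp add: partial_dir_def axial_def[abs_def])

lemma nvderiv_axial_shift:
  "nvderiv i (axial F j k) s = nvderiv i (axial F j (k + s *\<^sub>R axis j 1)) 0"
proof -
  have "(\<lambda>t. axial F j k (t + s)) = axial F j (k + s *\<^sub>R axis j 1)"
    by (simp add: axial_def fun_eq_iff algebra_simps scaleR_add_left)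
  then show ?thesis
    using fun_cong[OF nvderiv_shift_arg[of i "axial F j k" s], of 0] by simp
qed

definition reflect :: "'d \<Rightarrow> 'a::uminus ^ 'd \<Rightarrow> 'a ^ 'd" where
  "reflect j v = (\<chi> i. if i = j then - v $ i else v $ i)"

lemma reflect_reflect [simp]: "reflect j (reflect j (v :: 'a::group_add ^ 'd)) = v"
  by (simp add: reflect_def vec_eq_iff)

lemma axial_even_if_reflect_invariant:
  assumes "\<And>k. f (reflect j k) = f k" and "k $ j = 0"
  shows "axial f j k (- t) = axial f j k t"
proof -
  have "reflect j (k + t *\<^sub>R axis j 1) = k + (- t) *\<^sub>R axis j 1"
    using assms(2) by (simp add: reflect_def vec_eq_iff axis_def)
  then show ?thesis using assms(1)[of "k + t *\<^sub>R axis j 1"] by (simp add: axial_def)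
qed

lemma norm_nvderiv_axial_1_le:
  fixes f :: "real ^ 'd \<Rightarrow> complex"
  assumes even: "\<And>k. f (reflect j k) = f k"
    and diff: "\<And>k. differentiable_upto 2 (axial f j k) UNIV"
    and bound: "\<And>k. norm (nvderiv 2 (axial f j k) 0) \<le> C"
  shows "norm (nvderiv 1 (axial f j k) 0) \<le> C * norm k"
proof -
  let ?g = "nvderiv 1 (axial f j k)"
  have "(?g has_vector_derivative nvderiv 2 (axial f j k) s) (at s)" for s
    using has_vector_derivative_nvderiv[OF diff, of 1 s] by (simp add: numeral_2_eq_2)
  moreover have "norm (nvderiv 2 (axial f j k) s) \<le> C" for s
    using bound nvderiv_axial_shift by metis
  ultimately have "norm (?g 0 - ?g (- k $ j)) \<le> C * \<bar>0 - - k $ j\<bar>"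
    by (rule norm_diff_le_by_vector_derivative)
  moreover have "?g (- k $ j) = 0"
  proof -
    define k0 where "k0 = k + (- k $ j) *\<^sub>R axis j 1"
    have "k0 $ j = 0" by (simp add: k0_def axis_def)
    have "axial f j k0 differentiable at 0"
      using diff[of k0] unfolding differentiable_upto_def by (metis nvderiv.simps(1) zero_less_numeral UNIV_I)
    then have "vector_derivative (axial f j k0) (at 0) = 0"
      using axial_even_if_reflect_invariant[where f=f, OF even \<open>k0 $ j = 0\<close>]
      by (intro vector_derivative_even_at_0)
    then show ?thesis using nvderiv_axial_shift[of 1 f j k "- k $ j"] by (simp add: k0_def)
  qed
  moreover have "C \<ge> 0" using bound[of k] norm_ge_zero order_trans by blast
  then have "C * \<bar>k $ j\<bar> \<le> C * norm k"
    by (intro mult_left_mono component_le_norm_cart)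
  ultimately show ?thesis by simp
qed

lemma lat_nth [simp]: "lat x $ i = real_of_int (x $ i)"
  by (simp add: lat_def)

lemma norm_lat_ge_1: "x \<noteq> 0 \<Longrightarrow> 1 \<le> norm (lat x)"
proof -
  assume "x \<noteq> 0"
  then obtain i where "x $ i \<noteq> 0" by (auto simp: vec_eq_iff)
  then have "1 \<le> \<bar>lat x $ i\<bar>" by simp
  also have "\<dots> \<le> norm (lat x)" by (rule component_le_norm_cart)
  finally show ?thesis .
qed

lemma infinite_UNIV_int_vec: "infinite (UNIV :: (int ^ 'd) set)"
proof
  assume "finite (UNIV :: (int ^ 'd) set)"
  moreover have "inj (vec :: int \<Rightarrow> int ^ 'd)" by (rule injI) (simp add: vec_eq_iff)
  ultimately have "finite (UNIV :: int set)"
    using finite_imageD finite_subset subset_UNIV by metis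
  then show False by simp
qed

lemma abs_summable_of_second_moment:
  assumes "(\<lambda>x. norm (lat x) ^ 2 * \<bar>P x\<bar>) summable_on UNIV"
  shows "(\<lambda>x. \<bar>P x\<bar>) summable_on UNIV"
proof -
  have "(\<lambda>x. if x = 0 then \<bar>P 0\<bar> else 0) summable_on {0}"
    by (rule summable_on_finite) simp
  then have "(\<lambda>x. if x = 0 then \<bar>P 0\<bar> else 0) summable_on UNIV"
    by (rule summable_on_cong_neutral[THEN iffD1, rotated -1]) auto
  from summable_on_add[OF this assms] show ?thesis
  proof (rule summable_on_comparison_test)
    fix x :: "int ^ 'a"
    show "\<bar>P x\<bar> \<le> (if x = 0 then \<bar>P 0\<bar> else 0) + norm (lat x) ^ 2 * \<bar>P x\<bar>"
    proof (cases "x = 0")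
      case False
      then have "1 * \<bar>P x\<bar> \<le> norm (lat x) ^ 2 * \<bar>P x\<bar>"
        using norm_lat_ge_1 by (intro mult_right_mono one_le_power) auto
      then show ?thesis using False by simp
    qed simp
  qed simp
qed

lemma coordinate_moment_summable:
  fixes P :: "int ^ 'd \<Rightarrow> real"
  assumes "(\<lambda>x. \<bar>P x\<bar>) summable_on UNIV" "(\<lambda>x. norm (lat x) ^ N * \<bar>P x\<bar>) summable_on UNIV"
    and "n \<le> N"
  shows "(\<lambda>x. \<bar>P x\<bar> * \<bar>real_of_int (x $ j)\<bar> ^ n) summable_on UNIV"
  using summable_on_add[OF assms(1,2)]
proof (rule summable_on_comparison_test)
  fix x :: "int ^ 'd"
  have "\<bar>real_of_int (x $ j)\<bar> ^ n \<le> 1 + norm (lat x) ^ N"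
  proof (cases "norm (lat x) \<le> 1")
    case True
    then have "\<bar>real_of_int (x $ j)\<bar> ^ n \<le> 1"
      using component_le_norm_cart[of "lat x" j] by (intro power_le_one) auto
    then show ?thesis by (simp add: add_increasing2)
  next
    case False
    then have "\<bar>real_of_int (x $ j)\<bar> ^ n \<le> norm (lat x) ^ n"
      using component_le_norm_cart[of "lat x" j] by (intro power_mono) auto
    also have "\<dots> \<le> norm (lat x) ^ N"
      using False assms(3) by (intro power_increasing) auto
    finally show ?thesis by simp
  qed
  then have "\<bar>P x\<bar> * \<bar>real_of_int (x $ j)\<bar> ^ n \<le> \<bar>P x\<bar> * (1 + norm (lat x) ^ N)"
    by (intro mult_left_mono) auto
  then show "\<bar>P x\<bar> * \<bar>real_of_int (x $ j)\<bar> ^ n \<le> \<bar>P x\<bar> + norm (lat x) ^ N * \<bar>P x\<bar>"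
    by (simp add: algebra_simps)
qed simp

definition modulate :: "(int ^ 'd \<Rightarrow> real) \<Rightarrow> real ^ 'd \<Rightarrow> int ^ 'd \<Rightarrow> complex" where
  "modulate P k x = of_real (P x) * exp (- \<i> * of_real (k \<bullet> lat x))"

lemma norm_modulate [simp]: "norm (modulate P k x) = \<bar>P x\<bar>"
  by (simp add: modulate_def norm_mult norm_exp_minus_i_times)

lemma axial_FT: "axial (FT P) j k = fourier_sum (modulate P k) (\<lambda>x. real_of_int (x $ j)) 0"
proof
  fix t
  have "- \<i> * of_real ((k + t *\<^sub>R axis j 1) \<bullet> lat x)
      = - \<i> * of_real (k \<bullet> lat x) + - \<i> * (of_real t * of_real (real_of_int (x $ j)))" for x
    by (simp add: inner_add_left inner_axis' algebra_simps)
  then have "of_real (P x) * exp (- \<i> * of_real ((k + t *\<^sub>R axis j 1) \<bullet> lat x))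
      = fourier_term (modulate P k) (\<lambda>x. real_of_int (x $ j)) 0 x t" for x
    by (simp only: exp_add fourier_term_def modulate_def power_0 mult_1_right mult.assoc)
  then show "axial (FT P) j k t = fourier_sum (modulate P k) (\<lambda>x. real_of_int (x $ j)) 0 t"
    by (simp only: axial_def FT_def fourier_sum_def)
qed

lemma FT_axial_uniform_jets:
  fixes P :: "int ^ 'd \<Rightarrow> real"
  assumes "(\<lambda>x. \<bar>P x\<bar>) summable_on UNIV" "(\<lambda>x. norm (lat x) ^ N * \<bar>P x\<bar>) summable_on UNIV"
  shows "uniform.jet_bounded N 0 (axial (FT P) j)"
proof (rule uniform.jet_bounded_derivative_chain
    [where fs="\<lambda>k. fourier_sum (modulate P k) (\<lambda>x. real_of_int (x $ j))"
      and C="\<Sum>i\<le>N. \<Sum>\<^sub>\<infinity>x. \<bar>P x\<bar> * \<bar>real_of_int (x $ j)\<bar> ^ i"])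
  note moments = coordinate_moment_summable[OF assms, of _ j]
  show "(fourier_sum (modulate P k) (\<lambda>x. real_of_int (x $ j)) i has_vector_derivative
      fourier_sum (modulate P k) (\<lambda>x. real_of_int (x $ j)) (Suc i) t) (at t)" if "i < N" for k i t
    using that moments[of i] moments[of "Suc i"] infinite_UNIV_int_vec
    by (intro has_vector_derivative_fourier_sum) simp_all
  show "norm (fourier_sum (modulate P k) (\<lambda>x. real_of_int (x $ j)) i 0)
      \<le> (\<Sum>i\<le>N. \<Sum>\<^sub>\<infinity>x. \<bar>P x\<bar> * \<bar>real_of_int (x $ j)\<bar> ^ i) * 1 powr (0 - real i)"
    if "i \<le> N" for k i
  proof -
    have "norm (fourier_sum (modulate P k) (\<lambda>x. real_of_int (x $ j)) i 0)
        \<le> (\<Sum>\<^sub>\<infinity>x. \<bar>P x\<bar> * \<bar>real_of_int (x $ j)\<bar> ^ i)"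
      using norm_fourier_sum_le[of "modulate P k" "\<lambda>x. real_of_int (x $ j)" i 0] moments[OF that]
      by simp
    also have "\<dots> \<le> (\<Sum>i\<le>N. \<Sum>\<^sub>\<infinity>x. \<bar>P x\<bar> * \<bar>real_of_int (x $ j)\<bar> ^ i)"
      using that by (intro member_le_sum infsum_nonneg) auto
    finally show ?thesis by simp
  qed
qed (simp add: axial_FT)

lemma Dhat_axial:
  "Dhat (k + t *\<^sub>R axis j 1) =
     (\<Sum>i\<in>UNIV - {j}. cos (k $ i)) / real CARD('d) + cos (k $ j + t) / real CARD('d)"
  for k :: "real ^ 'd"
proof -
  have "(\<Sum>i\<in>UNIV. cos ((k + t *\<^sub>R axis j 1) $ i))
      = cos (k $ j + t) + (\<Sum>i\<in>UNIV - {j}. cos ((k + t *\<^sub>R axis j 1) $ i))"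
    by (subst sum.remove[of _ j]) (auto simp: axis_def)
  also have "(\<Sum>i\<in>UNIV - {j}. cos ((k + t *\<^sub>R axis j 1) $ i)) = (\<Sum>i\<in>UNIV - {j}. cos (k $ i))"
    by (rule sum.cong) (auto simp: axis_def)
  finally show ?thesis by (simp add: Dhat_def add_divide_distrib)
qed

lemma abs_Dhat_le_1: "\<bar>Dhat k\<bar> \<le> 1"
proof -
  have "\<bar>\<Sum>i\<in>UNIV. cos (k $ i)\<bar> \<le> (\<Sum>i\<in>(UNIV :: 'a set). 1)"
    by (rule order_trans[OF sum_abs sum_mono]) simp
  then show ?thesis by (simp add: Dhat_def abs_mult field_simps)
qed

lemma has_real_derivative_cos_shift:
  "((\<lambda>t. cos (a + t + real n * pi / 2)) has_real_derivative cos (a + t + real (Suc n) * pi / 2)) (at t)"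
proof -
  have "a + t + real (Suc n) * pi / 2 = (a + t + real n * pi / 2) + pi / 2"
    by (simp add: field_simps)
  then have "cos (a + t + real (Suc n) * pi / 2) = - sin (a + t + real n * pi / 2)"
    by (simp only: cos_add cos_pi_half sin_pi_half)
  then show ?thesis by (auto intro!: derivative_eq_intros)
qed

lemma has_real_derivative_Dhat_axial:
  "((\<lambda>t. Dhat (k + t *\<^sub>R axis j 1)) has_real_derivative
    cos (k $ j + t + real (Suc 0) * pi / 2) / real CARD('d)) (at t)"
  for k :: "real ^ 'd"
proof -
  have "(\<lambda>t. Dhat (k + t *\<^sub>R axis j 1)) = (\<lambda>t. (\<Sum>i\<in>UNIV - {j}. cos (k $ i)) / real CARD('d)
      + cos (k $ j + t + real 0 * pi / 2) / real CARD('d))"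
    by (simp add: Dhat_axial)
  moreover have "((\<lambda>t. (\<Sum>i\<in>UNIV - {j}. cos (k $ i)) / real CARD('d)
      + cos (k $ j + t + real 0 * pi / 2) / real CARD('d)) has_real_derivative
      0 + cos (k $ j + t + real (Suc 0) * pi / 2) / real CARD('d)) (at t)"
    by (intro DERIV_add DERIV_const DERIV_cdivide has_real_derivative_cos_shift)
  ultimately show ?thesis by simp
qed

lemma Dhat_axial_uniform_jets:
  fixes j :: "'d::finite"
  shows "uniform.jet_bounded N 0 (axial (\<lambda>k. of_real (Dhat k)) j)"
proof (rule uniform.jet_bounded_derivative_chain
    [where fs="\<lambda>k i t. of_real (if i = 0 then Dhat (k + t *\<^sub>R axis j 1)
      else cos (k $ j + t + real i * pi / 2) / real CARD('d))" and C=1])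
  fix k :: "real ^ 'd" and i t
  have "((\<lambda>t. if i = 0 then Dhat (k + t *\<^sub>R axis j 1)
      else cos (k $ j + t + real i * pi / 2) / real CARD('d)) has_real_derivative
    cos (k $ j + t + real (Suc i) * pi / 2) / real CARD('d)) (at t)"
    using has_real_derivative_Dhat_axial[of k j t]
      DERIV_cdivide[OF has_real_derivative_cos_shift[of "k $ j" i t], of "real CARD('d)"]
    by (cases "i = 0") simp_all
  then show "((\<lambda>t. of_real (if i = 0 then Dhat (k + t *\<^sub>R axis j 1)
      else cos (k $ j + t + real i * pi / 2) / real CARD('d))) has_vector_derivative
    of_real (if Suc i = 0 then Dhat (k + t *\<^sub>R axis j 1)
      else cos (k $ j + t + real (Suc i) * pi / 2) / real CARD('d))) (at t)"
    by (simp add: has_vector_derivative_of_real)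
  have "\<bar>cos (k $ j + real i * pi / 2)\<bar> / real CARD('d) \<le> 1 / 1"
    by (intro frac_le) (auto simp: Suc_le_eq)
  then show "norm (of_real (if i = 0 then Dhat (k + 0 *\<^sub>R axis j 1)
      else cos (k $ j + 0 + real i * pi / 2) / real CARD('d)) :: complex)
    \<le> 1 * 1 powr (0 - real i)"
    using abs_Dhat_le_1[of k] by simp
qed (simp add: axial_def)

lemma inner_reflect_lat: "reflect j k \<bullet> lat x = k \<bullet> lat (reflect j x)"
  unfolding inner_vec_def by (rule sum.cong) (auto simp: reflect_def)

lemma Zd_symmetric_reflect:
  assumes "Zd_symmetric P"
  shows "P (reflect j x) = P x"
proof -
  define s where "s i = (if i = j then - 1 else 1 :: int)" for i
  have "(\<chi> i. s i * x $ id i) = reflect j x" by (simp add: vec_eq_iff s_def reflect_def)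
  moreover have "P (\<chi> i. s i * x $ id i) = P x"
    using assms unfolding Zd_symmetric_def
    by (elim allE[of _ id] allE[of _ s] allE[of _ x]) (auto simp: s_def permutes_id)
  ultimately show ?thesis by simp
qed

lemma FT_reflect:
  fixes P :: "int ^ 'd \<Rightarrow> real"
  assumes "Zd_symmetric P"
  shows "FT P (reflect j k) = FT P k"
proof -
  have "bij_betw (reflect j) (UNIV :: (int ^ 'd) set) UNIV"
    by (rule bij_betw_byWitness[where f'="reflect j"]) auto
  from infsum_reindex_bij_betw[OF this, of "\<lambda>x. of_real (P x) * exp (- \<i> * of_real (k \<bullet> lat x))"]
  show ?thesis
    by (simp add: FT_def inner_reflect_lat Zd_symmetric_reflect[OF assms])
qed

lemma Dhat_reflect: "Dhat (reflect j k) = Dhat k"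
  unfolding Dhat_def by (rule arg_cong[where f="\<lambda>s. _ * s"], rule sum.cong) (auto simp: reflect_def)

lemma Jhat_reflect: "Zd_symmetric P \<Longrightarrow> Jhat c p G0 P (reflect j k) = Jhat c p G0 P k"
  by (cases c) (simp_all add: Jhat_def FT_reflect Dhat_reflect)

lemma
  fixes P :: "int ^ 'd \<Rightarrow> real" and j :: 'd
  assumes "(\<lambda>x. \<bar>P x\<bar>) summable_on UNIV" "(\<lambda>x. norm (lat x) ^ N * \<bar>P x\<bar>) summable_on UNIV"
  shows Jhat_axial_uniform_jets: "uniform.jet_bounded N 0 (axial (Jhat c p G0 P) j)"
    and ghat_axial_uniform_jets: "uniform.jet_bounded N 0 (axial (ghat c G0 P) j)"
proof -
  let ?D = "\<lambda>k t. of_real (2 * real CARD('d) * p) * axial (\<lambda>k. of_real (Dhat k)) j k t"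
    and ?T = "axial (FT P) j"
  have "uniform.jet_bounded N (0 + 0) ?D"
    by (rule uniform.jet_bounded_mult[OF uniform.jet_bounded_const Dhat_axial_uniform_jets])
  then have D: "uniform.jet_bounded N 0 ?D"
    by (simp only: add_0_left)
  have T: "uniform.jet_bounded N 0 ?T"
    by (rule FT_axial_uniform_jets[OF assms])
  have T1: "uniform.jet_bounded N 0 (\<lambda>k t. 1 + ?T k t)"
    and TG: "uniform.jet_bounded N 0 (\<lambda>k t. of_real G0 + ?T k t)"
    by (rule uniform.jet_bounded_add[OF uniform.jet_bounded_const T])+
  have "uniform.jet_bounded N 0 (\<lambda>k t. ?D k t + ?T k t)"
    and "uniform.jet_bounded N (0 + 0) (\<lambda>k t. ?D k t * (1 + ?T k t))"
    and "uniform.jet_bounded N (0 + 0) (\<lambda>k t. ?D k t * (of_real G0 + ?T k t))"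
    by (rule uniform.jet_bounded_add[OF D T] uniform.jet_bounded_mult[OF D T1]
        uniform.jet_bounded_mult[OF D TG])+
  moreover have "axial (Jhat c p G0 P) j = (case c of
      CaseA \<Rightarrow> \<lambda>k t. ?D k t + ?T k t
    | CaseB \<Rightarrow> \<lambda>k t. ?D k t * (1 + ?T k t)
    | CaseC \<Rightarrow> \<lambda>k t. ?D k t * (of_real G0 + ?T k t))"
    by (cases c) (simp_all add: fun_eq_iff axial_def Jhat_def)
  ultimately show "uniform.jet_bounded N 0 (axial (Jhat c p G0 P) j)"
    by (cases c) simp_all
  have "axial (ghat c G0 P) j = (case c of
      CaseA \<Rightarrow> \<lambda>k t. 1
    | CaseB \<Rightarrow> \<lambda>k t. 1 + ?T k t
    | CaseC \<Rightarrow> \<lambda>k t. of_real G0 + ?T k t)"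
    by (cases c) (simp_all add: fun_eq_iff axial_def ghat_def)
  with uniform.jet_bounded_const T1 TG show "uniform.jet_bounded N 0 (axial (ghat c G0 P) j)"
    by (cases c) simp_all
qed

lemma norm_le_of_mem_cube:
  fixes k :: "real ^ 'd"
  assumes "k \<in> cube"
  shows "norm k \<le> real CARD('d) * pi"
proof -
  have "norm k \<le> (\<Sum>i\<in>UNIV. \<bar>k $ i\<bar>)" by (rule norm_le_l1_cart)
  also have "\<dots> \<le> real CARD('d) * pi"
    using sum_bounded_above[of UNIV "\<lambda>i. \<bar>k $ i\<bar>" pi] assms by (simp add: cube_def)
  finally show ?thesis .
qed

section \<open>The propagator\<close>

lemma weighted_family_cube:
  fixes f :: "real ^ 'd \<Rightarrow> complex"
  assumes jets: "uniform.jet_bounded (Suc n) a (axial f j)"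
    and lower: "\<And>k. k \<in> cube \<Longrightarrow> c * norm k ^ 2 \<le> Re (1 - f k)" and c: "c > 0"
  shows "weighted_family (cube - {0}) norm (\<lambda>k. {t. axial f j k t \<noteq> 1})"
proof
  fix k :: "real ^ 'd" assume k: "k \<in> cube - {0}"
  then show "0 < norm k" by simp
  have "differentiable_upto (Suc n) (axial f j k) UNIV"
    using jets unfolding uniform_jet_bounded_iff by blast
  then have "axial f j k differentiable at t" for t
    unfolding differentiable_upto_def by (metis nvderiv.simps(1) zero_less_Suc UNIV_I)
  then have "continuous_on UNIV (axial f j k)"
    by (intro differentiable_imp_continuous_on differentiable_at_imp_differentiable_on) auto
  then show "open {t. axial f j k t \<noteq> 1}"
    by (intro open_Collect_neq) auto
  have "0 < c * norm k ^ 2" using k c by simp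
  then have "f k \<noteq> 1" using lower[of k] k by auto
  then show "0 \<in> {t. axial f j k t \<noteq> 1}" by (simp add: axial_def)
qed

lemma resolvent_axial_jets:
  fixes f :: "real ^ 'd \<Rightarrow> complex"
  assumes even: "\<And>k. f (reflect j k) = f k"
    and jets: "uniform.jet_bounded (Suc (Suc n)) 0 (axial f j)"
    and lower: "\<And>k. k \<in> cube \<Longrightarrow> c * norm k ^ 2 \<le> Re (1 - f k)" and c: "c > 0"
  shows "weighted_family.jet_bounded (cube - {0}) norm (\<lambda>k. {t. axial f j k t \<noteq> 1})
    (Suc (Suc n)) (- 2) (\<lambda>k t. inverse (1 - axial f j k t))"
proof -
  interpret weighted_family "cube - {0}" norm "\<lambda>k. {t. axial f j k t \<noteq> 1}"
    by (rule weighted_family_cube[OF jets lower c])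
  obtain C where C: "\<And>k. differentiable_upto (Suc (Suc n)) (axial f j k) UNIV"
    "\<And>k i. i \<le> Suc (Suc n) \<Longrightarrow> norm (nvderiv i (axial f j k) 0) \<le> C"
    using jets unfolding uniform_jet_bounded_iff by blast
  have "uniform.jet_bounded n (0 - 1 - 1) (\<lambda>k. nvderiv 2 (axial f j k))"
    using uniform.jet_bounded_deriv[OF uniform.jet_bounded_deriv[OF jets]]
    by (simp add: numeral_2_eq_2)
  then have "jet_bounded n 0 (\<lambda>k. nvderiv 2 (axial f j k))"
    by (rule jet_bounded_of_uniform[where R="real CARD('d) * pi"]) (simp add: norm_le_of_mem_cube)
  then have "jet_bounded n (1 - 1) (\<lambda>k. nvderiv 2 (axial f j k))"
    by simp
  then have "jet_bounded (Suc n) 1 (\<lambda>k. nvderiv 1 (axial f j k))"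
  proof (rule jet_bounded_primitive[where B=C])
    show "(nvderiv 1 (axial f j k) has_vector_derivative nvderiv 2 (axial f j k) t) (at t)" for k t
      using has_vector_derivative_nvderiv[OF C(1), of 1 t] by (simp add: numeral_2_eq_2)
    show "norm (nvderiv 1 (axial f j k) 0) \<le> C * norm k powr 1" for k
      using norm_nvderiv_axial_1_le[OF even differentiable_upto_le[OF C(1)] C(2), of k] by simp
  qed
  then have "jet_bounded (Suc n) (2 - 1) (\<lambda>k t. - nvderiv 1 (axial f j k) t)"
    using jet_bounded_uminus by simp
  then show ?thesis
  proof (rule jet_bounded_inverse[where c=c])
    show "((\<lambda>t. 1 - axial f j k t) has_vector_derivative - nvderiv 1 (axial f j k) t) (at t)" for k t
      using has_vector_derivative_nvderiv[OF C(1), of 0 t]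
      by (auto intro!: derivative_eq_intros)
    show "c * norm k powr 2 \<le> norm (1 - axial f j k 0)" if "k \<in> cube - {0}" for k
      using lower[of k] that complex_Re_le_cmod[of "1 - f k"] by (simp add: axial_def)
  qed (use c in auto)
qed

lemma propagator_axial_jets:
  fixes P :: "int ^ 'd \<Rightarrow> real" and j :: 'd
  assumes sym: "Zd_symmetric P"
    and sum2: "(\<lambda>x. norm (lat x) ^ 2 * \<bar>P x\<bar>) summable_on UNIV"
    and sumM: "(\<lambda>x. norm (lat x) ^ M * \<bar>P x\<bar>) summable_on UNIV"
    and lower: "\<And>k. k \<in> cube \<Longrightarrow> c1 * norm k ^ 2 \<le> Re (1 - Jhat c p G0 P k)" and c1: "c1 > 0"
  shows "weighted_family (cube - {0}) norm (\<lambda>k. {t. axial (Jhat c p G0 P) j k t \<noteq> 1})"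
    and "weighted_family.jet_bounded (cube - {0}) norm (\<lambda>k. {t. axial (Jhat c p G0 P) j k t \<noteq> 1})
      M (- 2) (axial (Ghat c p G0 P) j)"
proof -
  obtain n where n: "max M 2 = Suc (Suc n)"
    using le_Suc_ex[of 2 "max M 2"] by auto
  have "(\<lambda>x. norm (lat x) ^ max M 2 * \<bar>P x\<bar>) summable_on UNIV"
    using sum2 sumM by (cases "M \<le> 2") (simp_all only: max_absorb1 max_absorb2 not_le less_imp_le)
  then have moments: "(\<lambda>x. \<bar>P x\<bar>) summable_on UNIV"
    "(\<lambda>x. norm (lat x) ^ Suc (Suc n) * \<bar>P x\<bar>) summable_on UNIV"
    using abs_summable_of_second_moment[OF sum2] unfolding n by blast+
  let ?J = "Jhat c p G0 P" and ?g = "ghat c G0 P"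
  note J = Jhat_axial_uniform_jets[OF moments, of c p G0 j]
  show family: "weighted_family (cube - {0}) norm (\<lambda>k. {t. axial ?J j k t \<noteq> 1})"
    by (rule weighted_family_cube[OF J lower c1])
  interpret weighted_family "cube - {0}" norm "\<lambda>k. {t. axial ?J j k t \<noteq> 1}"
    by (rule family)
  have g: "jet_bounded (Suc (Suc n)) 0 (axial ?g j)"
    by (rule jet_bounded_of_uniform[OF ghat_axial_uniform_jets[OF moments], where R="real CARD('d) * pi"])
      (simp add: norm_le_of_mem_cube)
  have h: "jet_bounded (Suc (Suc n)) (- 2) (\<lambda>k t. inverse (1 - axial ?J j k t))"
    by (rule resolvent_axial_jets[OF Jhat_reflect[OF sym] J _ c1]) (rule lower)
  have "jet_bounded (Suc (Suc n)) (0 + - 2) (\<lambda>k t. axial ?g j k t * inverse (1 - axial ?J j k t))"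
    by (rule jet_bounded_mult[OF g h])
  then have "jet_bounded M (0 + - 2) (\<lambda>k t. axial ?g j k t * inverse (1 - axial ?J j k t))"
    by (rule jet_bounded_le) (use n in auto)
  moreover have "(\<lambda>k t. axial ?g j k t * inverse (1 - axial ?J j k t)) = axial (Ghat c p G0 P) j"
    by (simp add: fun_eq_iff axial_def Ghat_def divide_inverse)
  ultimately show "jet_bounded M (- 2) (axial (Ghat c p G0 P) j)"
    by simp
qed

theorem lemma4p1:
  fixes P :: "int ^ 'd \<Rightarrow> real" and c :: lace_case
    and p G0 c1 :: real and M :: nat
  assumes d3: "CARD('d) \<ge> 3"
    and sym: "Zd_symmetric P"
    and sum2: "(\<lambda>x. norm (lat x) ^ 2 * \<bar>P x\<bar>) summable_on UNIV"
    and sumM: "(\<lambda>x. norm (lat x) ^ M * \<bar>P x\<bar>) summable_on UNIV"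
    and M: "M \<ge> 1"
    and p: "p > 0" and G0: "G0 > 0"
    and J0: "Jhat c p G0 P 0 = 1"
    and c1: "c1 > 0"
    and IR: "\<forall>k\<in>cube. Re (Jhat c p G0 P 0 - Jhat c p G0 P k) \<ge> c1 * norm k ^ 2"
  shows "\<forall>m j. 1 \<le> m \<and> m \<le> M \<longrightarrow>
    (\<exists>C. \<forall>k\<in>cube. k \<noteq> 0 \<longrightarrow>
       (\<forall>i<m. \<forall>\<^sub>F t in nhds 0.
           partial_dir i j (Ghat c p G0 P) k differentiable at t) \<and>
       norm (partial_dir m j (Ghat c p G0 P) k 0) \<le> C / norm k ^ (2 + m))"
proof (intro allI impI)
  fix m and j :: 'd
  assume m: "1 \<le> m \<and> m \<le> M"
  have lower: "c1 * norm k ^ 2 \<le> Re (1 - Jhat c p G0 P k)" if "k \<in> cube" for k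
    using IR that unfolding J0 by blast
  note propagator = propagator_axial_jets[OF sym sum2 sumM lower c1, of j]
  interpret weighted_family "cube - {0}" norm "\<lambda>k. {t. axial (Jhat c p G0 P) j k t \<noteq> 1}"
    by (rule propagator(1))
  have "jet_bounded m (- real 2) (axial (Ghat c p G0 P) j)"
    using jet_bounded_le[OF propagator(2)] m by simp
  from jet_bounded_nvderiv_le[OF this]
  show "\<exists>C. \<forall>k\<in>cube. k \<noteq> 0 \<longrightarrow>
      (\<forall>i<m. \<forall>\<^sub>F t in nhds 0. partial_dir i j (Ghat c p G0 P) k differentiable at t) \<and>
      norm (partial_dir m j (Ghat c p G0 P) k 0) \<le> C / norm k ^ (2 + m)"
    unfolding partial_dir_eq_nvderiv_axial by auto
qed

end
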